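(* Let $(X,d,f)$ be a dynamical system where $X$ is uniformly locally compact. Then $(X,d,f)$ has the shadowing property if and only if it has the finite shadowing property.
   Context: A dynamical system $(X,d,f)$ is a separable metric space with continuous $f:X\to X$. $(X,d)$ is uniformly locally compact if there is $\varepsilon>0$ such that for every $x\in X$ the open ball of radius $\varepsilon$ centered at $x$ is contained in a compact set. A $\delta$-pseudo-orbit is a finite or infinite sequence $(x_n)$ with $d(f(x_n),x_{n+1})<\delta$; $x$ $\varepsilon$-shadows it if $d(f^n(x),x_n)<\varepsilon$ for all indices. Finite shadowing property: for every $\varepsilon>0$ there is $\delta>0$ such that every finite $\delta$-pseudo-orbit is $\varepsilon$-shadowed by some point; shadowing property: same for infinite pseudo-orbits. *)

theory Defs
  imports "HOL-Analysis.Analysis"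
begin

definition dyn_system :: "'a::metric_space set \<Rightarrow> ('a \<Rightarrow> 'a) \<Rightarrow> bool" where
  "dyn_system X f \<longleftrightarrow> separable_space (top_of_set X) \<and> f ` X \<subseteq> X \<and> continuous_on X f"

definition unif_locally_compact :: "'a::metric_space set \<Rightarrow> bool" where
  "unif_locally_compact X \<longleftrightarrow>
     (\<exists>e>0. \<forall>x\<in>X. \<exists>K. compact K \<and> K \<subseteq> X \<and> ball x e \<inter> X \<subseteq> K)"

definition fin_pseudo_orbit ::
  "'a::metric_space set \<Rightarrow> ('a \<Rightarrow> 'a) \<Rightarrow> real \<Rightarrow> (nat \<Rightarrow> 'a) \<Rightarrow> nat \<Rightarrow> bool" where
  "fin_pseudo_orbit X f \<delta> xs n \<longleftrightarrow>
     (\<forall>i\<le>n. xs i \<in> X) \<and> (\<forall>i<n. dist (f (xs i)) (xs (Suc i)) < \<delta>)"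

definition pseudo_orbit ::
  "'a::metric_space set \<Rightarrow> ('a \<Rightarrow> 'a) \<Rightarrow> real \<Rightarrow> (nat \<Rightarrow> 'a) \<Rightarrow> bool" where
  "pseudo_orbit X f \<delta> xs \<longleftrightarrow>
     (\<forall>i. xs i \<in> X) \<and> (\<forall>i. dist (f (xs i)) (xs (Suc i)) < \<delta>)"

definition finite_shadowing :: "'a::metric_space set \<Rightarrow> ('a \<Rightarrow> 'a) \<Rightarrow> bool" where
  "finite_shadowing X f \<longleftrightarrow>
     (\<forall>\<epsilon>>0. \<exists>\<delta>>0. \<forall>xs n. fin_pseudo_orbit X f \<delta> xs n \<longrightarrow>
        (\<exists>y\<in>X. \<forall>i\<le>n. dist ((f ^^ i) y) (xs i) < \<epsilon>))"

definition shadowing :: "'a::metric_space set \<Rightarrow> ('a \<Rightarrow> 'a) \<Rightarrow> bool" where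
  "shadowing X f \<longleftrightarrow>
     (\<forall>\<epsilon>>0. \<exists>\<delta>>0. \<forall>xs. pseudo_orbit X f \<delta> xs \<longrightarrow>
        (\<exists>y\<in>X. \<forall>i. dist ((f ^^ i) y) (xs i) < \<epsilon>))"

end

theory Submission
  imports Defs
begin

text \<open>Shadowing trivially gives finite shadowing, since a finite pseudo-orbit can be continued
  by a true orbit. Conversely, given an infinite \<open>\<delta>\<close>-pseudo-orbit, finite shadowing yields
  for each \<open>n\<close> a point \<open>y\<^sub>n\<close> shadowing its first \<open>n\<close> terms. All \<open>y\<^sub>n\<close> lie close to the
  initial term, hence, by uniform local compactness, in one compact set (this is where
  uniformity is needed: \<open>\<delta>\<close> must be chosen before the pseudo-orbit). By continuity of the
  iterates, a limit point of the \<open>y\<^sub>n\<close> shadows the whole pseudo-orbit, with the non-strict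
  bound \<open>\<le> \<epsilon>/2 < \<epsilon>\<close>.\<close>

lemma funpow_in_invariant: "f ` X \<subseteq> X \<Longrightarrow> x \<in> X \<Longrightarrow> (f ^^ i) x \<in> X"
  by (induction i) auto

lemma continuous_on_funpow:
  assumes "f ` X \<subseteq> X" and "continuous_on X f"
  shows "continuous_on X (f ^^ i)"
proof (induction i)
  case 0
  then show ?case by (simp add: continuous_on_id)
next
  case (Suc i)
  have "continuous_on X (f \<circ> (f ^^ i))"
    using Suc assms by (intro continuous_on_compose) (auto intro: continuous_on_subset funpow_in_invariant)
  then show ?case by simp
qed

lemma pseudo_orbit_imp_fin_pseudo_orbit:
  "pseudo_orbit X f \<delta> xs \<Longrightarrow> fin_pseudo_orbit X f \<delta> xs n"
  unfolding pseudo_orbit_def fin_pseudo_orbit_def by auto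

lemma fin_pseudo_orbit_extend_by_orbit:
  assumes "f ` X \<subseteq> X" and "\<delta> > 0" and xs: "fin_pseudo_orbit X f \<delta> xs n"
  shows "pseudo_orbit X f \<delta> (\<lambda>i. if i \<le> n then xs i else (f ^^ (i - n)) (xs n))"
    (is "pseudo_orbit X f \<delta> ?zs")
  unfolding pseudo_orbit_def
proof (intro conjI allI)
  fix i
  show "?zs i \<in> X"
    using xs funpow_in_invariant[OF assms(1)] unfolding fin_pseudo_orbit_def by auto
  show "dist (f (?zs i)) (?zs (Suc i)) < \<delta>"
  proof (cases "i < n")
    case True
    then show ?thesis using xs unfolding fin_pseudo_orbit_def by auto
  next
    case False
    then have "Suc i - n = Suc (i - n)" by auto
    with False have "?zs (Suc i) = f (?zs i)" by (auto simp: funpow_swap1)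
    then show ?thesis using \<open>\<delta> > 0\<close> by simp
  qed
qed

lemma shadowing_imp_finite_shadowing:
  assumes "f ` X \<subseteq> X" and "shadowing X f"
  shows "finite_shadowing X f"
  unfolding finite_shadowing_def
proof (intro allI impI)
  fix \<epsilon> :: real
  assume "\<epsilon> > 0"
  then obtain \<delta> where "\<delta> > 0" and shadow: "\<And>xs. pseudo_orbit X f \<delta> xs \<Longrightarrow>
      \<exists>y\<in>X. \<forall>i. dist ((f ^^ i) y) (xs i) < \<epsilon>"
    using assms(2) unfolding shadowing_def by blast
  have "\<exists>y\<in>X. \<forall>i\<le>n. dist ((f ^^ i) y) (xs i) < \<epsilon>"
    if xs: "fin_pseudo_orbit X f \<delta> xs n" for xs n
  proof -
    obtain y where "y \<in> X"
      and "\<forall>i. dist ((f ^^ i) y) (if i \<le> n then xs i else (f ^^ (i - n)) (xs n)) < \<epsilon>"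
      using shadow[OF fin_pseudo_orbit_extend_by_orbit[OF assms(1) \<open>\<delta> > 0\<close> xs]] by blast
    then show ?thesis by (metis (full_types))
  qed
  with \<open>\<delta> > 0\<close> show "\<exists>\<delta>>0. \<forall>xs n. fin_pseudo_orbit X f \<delta> xs n \<longrightarrow>
      (\<exists>y\<in>X. \<forall>i\<le>n. dist ((f ^^ i) y) (xs i) < \<epsilon>)"
    by blast
qed

lemma finite_shadows_in_compact_imp_shadow:
  assumes "f ` X \<subseteq> X" and "continuous_on X f" and "compact K" and "K \<subseteq> X"
    and finite_shadows: "\<forall>n. \<exists>y\<in>K. \<forall>i\<le>n. dist ((f ^^ i) y) (xs i) \<le> \<epsilon>"
  shows "\<exists>z\<in>K. \<forall>i. dist ((f ^^ i) z) (xs i) \<le> \<epsilon>"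
proof -
  have "\<forall>n. \<exists>y. y \<in> K \<and> (\<forall>i\<le>n. dist ((f ^^ i) y) (xs i) \<le> \<epsilon>)"
    using finite_shadows by blast
  then obtain y where y: "\<forall>n. y n \<in> K \<and> (\<forall>i\<le>n. dist ((f ^^ i) (y n)) (xs i) \<le> \<epsilon>)"
    by (rule choice[THEN exE])
  then obtain z r where "z \<in> K" and "strict_mono r" and lim: "(y \<circ> r) \<longlonglongrightarrow> z"
    using seq_compactE[OF compact_imp_seq_compact[OF \<open>compact K\<close>]] by blast
  have "dist ((f ^^ i) z) (xs i) \<le> \<epsilon>" for i
  proof (rule tendsto_upperbound)
    have "(\<lambda>k. (f ^^ i) ((y \<circ> r) k)) \<longlonglongrightarrow> (f ^^ i) z"
      using \<open>z \<in> K\<close> \<open>K \<subseteq> X\<close> y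
      by (intro continuous_on_tendsto_compose[OF continuous_on_funpow[OF assms(1,2)] lim])
        (auto intro!: always_eventually)
    then show "(\<lambda>k. dist ((f ^^ i) ((y \<circ> r) k)) (xs i)) \<longlonglongrightarrow> dist ((f ^^ i) z) (xs i)"
      by (intro tendsto_dist tendsto_const)
    have "i \<le> r k" if "k \<ge> i" for k
      using seq_suble[OF \<open>strict_mono r\<close>, of k] that by linarith
    then show "\<forall>\<^sub>F k in sequentially. dist ((f ^^ i) ((y \<circ> r) k)) (xs i) \<le> \<epsilon>"
      unfolding eventually_sequentially using y by auto
  qed simp
  with \<open>z \<in> K\<close> show ?thesis by blast
qed

lemma finite_shadowing_imp_shadowing:
  assumes "f ` X \<subseteq> X" and "continuous_on X f"
    and "unif_locally_compact X" and "finite_shadowing X f"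
  shows "shadowing X f"
  unfolding shadowing_def
proof (intro allI impI)
  fix \<epsilon> :: real
  assume "\<epsilon> > 0"
  obtain e where "e > 0" and compact_nbhd: "\<forall>x\<in>X. \<exists>K. compact K \<and> K \<subseteq> X \<and> ball x e \<inter> X \<subseteq> K"
    using assms(3) unfolding unif_locally_compact_def by (elim exE conjE)
  define \<epsilon>' where "\<epsilon>' = min (\<epsilon>/2) e"
  have "\<epsilon>' > 0" "\<epsilon>' < \<epsilon>" "\<epsilon>' \<le> e" using \<open>\<epsilon> > 0\<close> \<open>e > 0\<close> unfolding \<epsilon>'_def by auto
  then obtain \<delta> where "\<delta> > 0" and fin_shadow: "\<And>xs n. fin_pseudo_orbit X f \<delta> xs n \<Longrightarrow>
      \<exists>y\<in>X. \<forall>i\<le>n. dist ((f ^^ i) y) (xs i) < \<epsilon>'"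
    using assms(4) unfolding finite_shadowing_def by blast
  have "\<exists>z\<in>X. \<forall>i. dist ((f ^^ i) z) (xs i) < \<epsilon>" if xs: "pseudo_orbit X f \<delta> xs" for xs
  proof -
    have "xs 0 \<in> X" using xs unfolding pseudo_orbit_def by simp
    with compact_nbhd obtain K where "compact K" "K \<subseteq> X" and K: "ball (xs 0) e \<inter> X \<subseteq> K"
      by blast
    have "\<forall>n. \<exists>y\<in>K. \<forall>i\<le>n. dist ((f ^^ i) y) (xs i) \<le> \<epsilon>'"
    proof
      fix n
      obtain y where "y \<in> X" and y: "\<forall>i\<le>n. dist ((f ^^ i) y) (xs i) < \<epsilon>'"
        using fin_shadow[OF pseudo_orbit_imp_fin_pseudo_orbit[OF xs]] by blast
      have "dist (xs 0) y < e"
        using y[rule_format, of 0] \<open>\<epsilon>' \<le> e\<close> by (simp add: dist_commute)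
      with \<open>y \<in> X\<close> K have "y \<in> K" by auto
      with y show "\<exists>y\<in>K. \<forall>i\<le>n. dist ((f ^^ i) y) (xs i) \<le> \<epsilon>'"
        by (auto intro: less_imp_le)
    qed
    from finite_shadows_in_compact_imp_shadow[OF assms(1,2) \<open>compact K\<close> \<open>K \<subseteq> X\<close> this]
    obtain z where "z \<in> K" and z_shadows: "\<forall>i. dist ((f ^^ i) z) (xs i) \<le> \<epsilon>'"
      by (elim bexE)
    have "\<forall>i. dist ((f ^^ i) z) (xs i) < \<epsilon>"
      using z_shadows \<open>\<epsilon>' < \<epsilon>\<close> by (meson le_less_trans)
    with \<open>z \<in> K\<close> \<open>K \<subseteq> X\<close> show ?thesis by blast
  qed
  with \<open>\<delta> > 0\<close> show "\<exists>\<delta>>0. \<forall>xs. pseudo_orbit X f \<delta> xs \<longrightarrow> (\<exists>y\<in>X. \<forall>i. dist ((f ^^ i) y) (xs i) < \<epsilon>)"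
    by blast
qed

theorem proposition2p16:
  fixes X :: "'a::metric_space set" and f :: "'a \<Rightarrow> 'a"
  assumes "dyn_system X f"
    and "unif_locally_compact X"
  shows "shadowing X f \<longleftrightarrow> finite_shadowing X f"
proof -
  have "f ` X \<subseteq> X" and "continuous_on X f"
    using assms(1) unfolding dyn_system_def by auto
  then show ?thesis
    using assms(2) shadowing_imp_finite_shadowing finite_shadowing_imp_shadowing by blast
qed

end
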